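(* For a subsystem code with logical subsystem $\mathcal{H}_L$ of dimension at least $2$, the code price is at least the code distance: $p\ge d$.
   Context: Subsystem code: encoding isometry $V:\mathcal{H}_L\otimes\mathcal{H}_J\to\mathcal{H}_p$ onto a physical system of finitely many qudits; $\Pi=VV^\dagger$. $A$ is CSP if $[A,\Pi]=0$; bare-CSP if moreover $V^\dagger AV=A_L\otimes\mathrm{Id}_J$ (it implements $A_L\otimes\mathrm{Id}_J$). A region $R$ is a set of physical qudits; supported on $R$ means of the form $A_R\otimes\mathrm{Id}_{R^c}$. $R$ is correctable if for every $A_L\in\mathcal{B}(\mathcal{H}_L)$ there is a bare-CSP operator supported on $R^c$ implementing $A_L\otimes\mathrm{Id}_J$. Code distance $d=\min\{|R|: R\text{ not correctable}\}$; code price $p=\min\{|R|: R^c\text{ correctable}\}$, with $|R|$ the number of qudits. *)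

theory Defs
  imports Complex_Main
begin

text \<open>Physical system: n qudits, qudit i has local dimension dims i.
  Computational basis of H_p = configurations x with x i < dims i for i < n
  (and x i = 0 for i >= n). Operators on H_p are given by their matrix entries
  indexed by pairs of configurations. H_L (x) H_J has basis (l,j) with l < dL, j < dJ.
  The encoding isometry V is given by its entries V x (l,j).\<close>

definition cfgs :: "nat \<Rightarrow> (nat \<Rightarrow> nat) \<Rightarrow> (nat \<Rightarrow> nat) set" where
  "cfgs n dims = {x. \<forall>i. (i < n \<longrightarrow> x i < dims i) \<and> (n \<le> i \<longrightarrow> x i = 0)}"

definition lidx :: "nat \<Rightarrow> nat \<Rightarrow> (nat \<times> nat) set" where
  "lidx dL dJ = {..<dL} \<times> {..<dJ}"

type_synonym pop = "(nat \<Rightarrow> nat) \<Rightarrow> (nat \<Rightarrow> nat) \<Rightarrow> complex"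
type_synonym enc = "(nat \<Rightarrow> nat) \<Rightarrow> (nat \<times> nat) \<Rightarrow> complex"

definition pmult :: "nat \<Rightarrow> (nat \<Rightarrow> nat) \<Rightarrow> pop \<Rightarrow> pop \<Rightarrow> pop" where
  "pmult n dims A B = (\<lambda>x y. \<Sum>z\<in>cfgs n dims. A x z * B z y)"

definition is_isometry :: "nat \<Rightarrow> (nat \<Rightarrow> nat) \<Rightarrow> nat \<Rightarrow> nat \<Rightarrow> enc \<Rightarrow> bool" where
  "is_isometry n dims dL dJ V \<longleftrightarrow>
     (\<forall>k\<in>lidx dL dJ. \<forall>k'\<in>lidx dL dJ.
        (\<Sum>x\<in>cfgs n dims. cnj (V x k) * V x k') = (if k = k' then 1 else 0))"

definition code_proj :: "nat \<Rightarrow> nat \<Rightarrow> enc \<Rightarrow> pop" where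
  "code_proj dL dJ V = (\<lambda>x y. \<Sum>k\<in>lidx dL dJ. V x k * cnj (V y k))"

definition CSP :: "nat \<Rightarrow> (nat \<Rightarrow> nat) \<Rightarrow> nat \<Rightarrow> nat \<Rightarrow> enc \<Rightarrow> pop \<Rightarrow> bool" where
  "CSP n dims dL dJ V A \<longleftrightarrow>
     (\<forall>x\<in>cfgs n dims. \<forall>y\<in>cfgs n dims.
        pmult n dims A (code_proj dL dJ V) x y = pmult n dims (code_proj dL dJ V) A x y)"

text \<open>Entries of V^dagger A V.\<close>
definition pullback :: "nat \<Rightarrow> (nat \<Rightarrow> nat) \<Rightarrow> enc \<Rightarrow> pop \<Rightarrow> (nat \<times> nat) \<Rightarrow> (nat \<times> nat) \<Rightarrow> complex" where
  "pullback n dims V A k k' = (\<Sum>x\<in>cfgs n dims. \<Sum>y\<in>cfgs n dims. cnj (V x k) * A x y * V y k')"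

text \<open>A is bare-CSP and implements A_L (x) Id_J (A_L an operator on H_L, entries l,l' < dL).\<close>
definition bare_CSP_impl :: "nat \<Rightarrow> (nat \<Rightarrow> nat) \<Rightarrow> nat \<Rightarrow> nat \<Rightarrow> enc \<Rightarrow> pop \<Rightarrow> (nat \<Rightarrow> nat \<Rightarrow> complex) \<Rightarrow> bool" where
  "bare_CSP_impl n dims dL dJ V A AL \<longleftrightarrow>
     CSP n dims dL dJ V A \<and>
     (\<forall>k\<in>lidx dL dJ. \<forall>k'\<in>lidx dL dJ.
        pullback n dims V A k k' = AL (fst k) (fst k') * (if snd k = snd k' then 1 else 0))"

text \<open>A is supported on region R, i.e. A = A_R (x) Id_{R^c}: written out in the
  computational basis, A x y vanishes unless x and y agree outside R, and otherwise
  depends only on the restrictions of x and y to R.\<close>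
definition supported_on :: "nat \<Rightarrow> (nat \<Rightarrow> nat) \<Rightarrow> nat set \<Rightarrow> pop \<Rightarrow> bool" where
  "supported_on n dims R A \<longleftrightarrow>
     (\<exists>AR :: pop. \<forall>x\<in>cfgs n dims. \<forall>y\<in>cfgs n dims.
        A x y = (if (\<forall>i\<in>{..<n} - R. x i = y i)
                 then AR (\<lambda>i. if i \<in> R then x i else 0) (\<lambda>i. if i \<in> R then y i else 0)
                 else 0))"

definition correctable :: "nat \<Rightarrow> (nat \<Rightarrow> nat) \<Rightarrow> nat \<Rightarrow> nat \<Rightarrow> enc \<Rightarrow> nat set \<Rightarrow> bool" where
  "correctable n dims dL dJ V R \<longleftrightarrow>
     (\<forall>AL :: nat \<Rightarrow> nat \<Rightarrow> complex. \<exists>A :: pop.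
        supported_on n dims ({..<n} - R) A \<and> bare_CSP_impl n dims dL dJ V A AL)"

definition code_distance :: "nat \<Rightarrow> (nat \<Rightarrow> nat) \<Rightarrow> nat \<Rightarrow> nat \<Rightarrow> enc \<Rightarrow> nat" where
  "code_distance n dims dL dJ V =
     Min {card R | R. R \<subseteq> {..<n} \<and> \<not> correctable n dims dL dJ V R}"

definition code_price :: "nat \<Rightarrow> (nat \<Rightarrow> nat) \<Rightarrow> nat \<Rightarrow> nat \<Rightarrow> enc \<Rightarrow> nat" where
  "code_price n dims dL dJ V =
     Min {card R | R. R \<subseteq> {..<n} \<and> correctable n dims dL dJ V ({..<n} - R)}"

end

theory Submission
  imports Defs
begin

text \<open>
  If a region R and its complement were both correctable, the logical operators
  |0\<rangle>\<langle>1| \<otimes> Id_J and |1\<rangle>\<langle>0| \<otimes> Id_J would be implemented by bare-CSP operators A supported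
  on R and B supported on the complement. Operators acting on disjoint sets of qudits commute,
  so AB = BA. But the logical action of a product of CSP operators is the product of the logical
  actions, and |0\<rangle>\<langle>1|1\<rangle>\<langle>0| = |0\<rangle>\<langle>0| differs from |1\<rangle>\<langle>0|0\<rangle>\<langle>1| = |1\<rangle>\<langle>1|.
  Hence a region attaining the code price, whose complement is correctable by definition,
  is itself not correctable, and d \<le> p.
\<close>

definition mmult :: "'b set \<Rightarrow> ('a \<Rightarrow> 'b \<Rightarrow> 'r::semiring_0) \<Rightarrow> ('b \<Rightarrow> 'c \<Rightarrow> 'r) \<Rightarrow> 'a \<Rightarrow> 'c \<Rightarrow> 'r"
  where "mmult I A B = (\<lambda>x y. \<Sum>z\<in>I. A x z * B z y)"

definition idm :: "'a \<Rightarrow> 'a \<Rightarrow> 'r::semiring_1"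
  where "idm a b = of_bool (a = b)"

lemma mmult_assoc: "mmult J (mmult I A B) C = mmult I A (mmult J B C)"
proof (intro ext)
  fix x y
  have "mmult J (mmult I A B) C x y = (\<Sum>z\<in>J. \<Sum>w\<in>I. A x w * B w z * C z y)"
    by (simp add: mmult_def sum_distrib_right)
  also have "\<dots> = (\<Sum>w\<in>I. \<Sum>z\<in>J. A x w * B w z * C z y)"
    by (rule sum.swap)
  also have "\<dots> = mmult I A (mmult J B C) x y"
    by (simp add: mmult_def sum_distrib_left mult.assoc)
  finally show "mmult J (mmult I A B) C x y = mmult I A (mmult J B C) x y" .
qed

lemma mmult_cong_left:
  "(\<And>z. z \<in> I \<Longrightarrow> A x z = A' x z) \<Longrightarrow> mmult I A B x y = mmult I A' B x y"
  unfolding mmult_def by (intro sum.cong) auto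

lemma mmult_cong_right:
  "(\<And>z. z \<in> I \<Longrightarrow> B z y = B' z y) \<Longrightarrow> mmult I A B x y = mmult I A B' x y"
  unfolding mmult_def by (intro sum.cong) auto

lemma mmult_idm_right:
  fixes A :: "'a \<Rightarrow> 'b \<Rightarrow> 'r::semiring_1"
  shows "finite I \<Longrightarrow> y \<in> I \<Longrightarrow> mmult I A idm x y = A x y"
  by (simp add: mmult_def idm_def Int_insert_right_if1)

lemma mmult_idm_left:
  fixes B :: "'b \<Rightarrow> 'c \<Rightarrow> 'r::semiring_1"
  shows "finite I \<Longrightarrow> x \<in> I \<Longrightarrow> mmult I idm B x y = B x y"
  by (simp add: mmult_def idm_def Int_insert_right_if1)

definition adjoint :: "('a \<Rightarrow> 'b \<Rightarrow> complex) \<Rightarrow> 'b \<Rightarrow> 'a \<Rightarrow> complex"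
  where "adjoint V = (\<lambda>k x. cnj (V x k))"

lemma pmult_eq_mmult: "pmult n dims = mmult (cfgs n dims)"
  by (intro ext) (simp add: pmult_def mmult_def)

lemma code_proj_eq_mmult: "code_proj dL dJ V = mmult (lidx dL dJ) V (adjoint V)"
  by (simp add: code_proj_def mmult_def adjoint_def)

lemma pullback_eq_mmult:
  "pullback n dims V A = mmult (cfgs n dims) (mmult (cfgs n dims) (adjoint V) A) V"
proof (intro ext)
  fix k k'
  have "pullback n dims V A k k' = (\<Sum>y\<in>cfgs n dims. \<Sum>x\<in>cfgs n dims. cnj (V x k) * A x y * V y k')"
    unfolding pullback_def by (rule sum.swap)
  then show "pullback n dims V A k k' = mmult (cfgs n dims) (mmult (cfgs n dims) (adjoint V) A) V k k'"
    by (simp add: mmult_def adjoint_def sum_distrib_right)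
qed

lemma is_isometry_iff:
  "is_isometry n dims dL dJ V \<longleftrightarrow>
     (\<forall>k\<in>lidx dL dJ. \<forall>k'\<in>lidx dL dJ. mmult (cfgs n dims) (adjoint V) V k k' = idm k k')"
  by (simp add: is_isometry_def mmult_def adjoint_def idm_def)

lemma finite_cfgs: "finite (cfgs n dims)"
proof (rule finite_subset)
  show "cfgs n dims \<subseteq> {x. \<forall>i. (i \<in> {..<n} \<longrightarrow> x i \<in> (\<Union>j<n. {..<dims j})) \<and> (i \<notin> {..<n} \<longrightarrow> x i = 0)}"
    by (auto simp: cfgs_def)
  show "finite \<dots>"
    by (rule finite_set_of_finite_funs) auto
qed

lemma finite_lidx: "finite (lidx dL dJ)"
  by (simp add: lidx_def)

definition tensor_id :: "(nat \<Rightarrow> nat \<Rightarrow> complex) \<Rightarrow> nat \<times> nat \<Rightarrow> nat \<times> nat \<Rightarrow> complex"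
  where "tensor_id AL = (\<lambda>k k'. AL (fst k) (fst k') * (if snd k = snd k' then 1 else 0))"

lemma bare_CSP_impl_iff:
  "bare_CSP_impl n dims dL dJ V A AL \<longleftrightarrow> CSP n dims dL dJ V A \<and>
     (\<forall>k\<in>lidx dL dJ. \<forall>k'\<in>lidx dL dJ. pullback n dims V A k k' = tensor_id AL k k')"
  by (simp add: bare_CSP_impl_def tensor_id_def)

lemma mmult_tensor_id:
  assumes "k \<in> lidx dL dJ"
  shows "mmult (lidx dL dJ) (tensor_id AL) (tensor_id BL) k k'
       = tensor_id (\<lambda>l l'. \<Sum>m<dL. AL l m * BL m l') k k'"
proof -
  obtain a j a' j' where k: "k = (a, j)" and k': "k' = (a', j')" and j: "j < dJ"
    using assms by (cases k, cases k') (auto simp: lidx_def)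
  have "mmult (lidx dL dJ) (tensor_id AL) (tensor_id BL) k k'
      = (\<Sum>m<dL. \<Sum>i<dJ. if j = i then AL a m * BL m a' * (if j = j' then 1 else 0) else 0)"
    unfolding mmult_def tensor_id_def lidx_def k k'
    by (simp only: sum.cartesian_product' fst_conv snd_conv) (intro sum.cong refl; simp)
  also have "\<dots> = tensor_id (\<lambda>l l'. \<Sum>m<dL. AL l m * BL m l') k k'"
    using j by (simp add: tensor_id_def k k' sum_distrib_right)
  finally show ?thesis .
qed

lemma CSP_iff_mmult:
  "CSP n dims dL dJ V A \<longleftrightarrow> (\<forall>x\<in>cfgs n dims. \<forall>y\<in>cfgs n dims.
     mmult (cfgs n dims) A (code_proj dL dJ V) x y = mmult (cfgs n dims) (code_proj dL dJ V) A x y)"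
  by (simp add: CSP_def pmult_eq_mmult)

lemma CSP_pmult:
  assumes A: "CSP n dims dL dJ V A" and B: "CSP n dims dL dJ V B"
  shows "CSP n dims dL dJ V (pmult n dims A B)"
proof -
  let ?C = "cfgs n dims" and ?P = "code_proj dL dJ V"
  have "mmult ?C (mmult ?C A B) ?P x y = mmult ?C ?P (mmult ?C A B) x y"
    if x: "x \<in> ?C" and y: "y \<in> ?C" for x y
  proof -
    have "mmult ?C (mmult ?C A B) ?P x y = mmult ?C A (mmult ?C ?P B) x y"
      unfolding mmult_assoc by (rule mmult_cong_right) (use B y in \<open>simp add: CSP_iff_mmult\<close>)
    also have "\<dots> = mmult ?C (mmult ?C ?P A) B x y"
      unfolding mmult_assoc[symmetric] by (rule mmult_cong_left) (use A x in \<open>simp add: CSP_iff_mmult\<close>)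
    finally show ?thesis
      by (simp add: mmult_assoc)
  qed
  then show ?thesis
    by (simp add: CSP_iff_mmult pmult_eq_mmult)
qed

lemma cfgs_eqI:
  assumes "x \<in> cfgs n dims" and "y \<in> cfgs n dims" and "\<And>i. i < n \<Longrightarrow> x i = y i"
  shows "x = y"
proof
  fix i
  show "x i = y i"
    by (cases "i < n") (use assms in \<open>auto simp: cfgs_def\<close>)
qed

lemma supported_on_eq_0:
  assumes "supported_on n dims R A" and "x \<in> cfgs n dims" and "y \<in> cfgs n dims"
    and "i \<in> {..<n} - R" and "x i \<noteq> y i"
  shows "A x y = 0"
  using assms unfolding supported_on_def by fastforce

lemma supported_on_eq:
  assumes A: "supported_on n dims R A"
    and cfgs: "x \<in> cfgs n dims" "y \<in> cfgs n dims" "x' \<in> cfgs n dims" "y' \<in> cfgs n dims"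
    and on_R: "\<And>i. i \<in> R \<Longrightarrow> x i = x' i \<and> y i = y' i"
    and off_R: "\<And>i. i \<in> {..<n} - R \<Longrightarrow> x i = y i \<and> x' i = y' i"
  shows "A x y = A x' y'"
proof -
  have "(\<lambda>i. if i \<in> R then x i else 0) = (\<lambda>i. if i \<in> R then x' i else 0)"
    and "(\<lambda>i. if i \<in> R then y i else 0) = (\<lambda>i. if i \<in> R then y' i else 0)"
    using on_R by auto
  then show ?thesis
    using A cfgs off_R unfolding supported_on_def by (metis (no_types, lifting))
qed

lemma pmult_supported_complement:
  assumes R: "R \<subseteq> {..<n}"
    and A: "supported_on n dims R A" and B: "supported_on n dims ({..<n} - R) B"
    and cfgs: "x \<in> cfgs n dims" "y \<in> cfgs n dims" "w \<in> cfgs n dims"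
    and w: "\<And>i. i \<in> R \<Longrightarrow> w i = y i" "\<And>i. i \<in> {..<n} - R \<Longrightarrow> w i = x i"
  shows "pmult n dims A B x y = A x w * B w y"
proof -
  have "A x z * B z y = 0" if z: "z \<in> cfgs n dims - {w}" for z
  proof -
    obtain i where i: "i < n" "z i \<noteq> w i"
      using z cfgs cfgs_eqI by blast
    show ?thesis
    proof (cases "i \<in> R")
      case True
      then have "B z y = 0"
        using B z cfgs i w by (intro supported_on_eq_0[of n dims "{..<n} - R" B z y i]) auto
      then show ?thesis by simp
    next
      case False
      then have "A x z = 0"
        using A z cfgs i w by (intro supported_on_eq_0[of n dims R A x z i]) auto
      then show ?thesis by simp
    qed
  qed
  then have "pmult n dims A B x y = (\<Sum>z\<in>{w}. A x z * B z y)"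
    unfolding pmult_def using cfgs by (intro sum.mono_neutral_right finite_cfgs) auto
  then show ?thesis by simp
qed

lemma supported_on_complement_commute:
  assumes R: "R \<subseteq> {..<n}"
    and A: "supported_on n dims R A" and B: "supported_on n dims ({..<n} - R) B"
    and x: "x \<in> cfgs n dims" and y: "y \<in> cfgs n dims"
  shows "pmult n dims A B x y = pmult n dims B A x y"
proof -
  define w where "w i = (if i \<in> R then y i else x i)" for i
  define w' where "w' i = (if i \<in> R then x i else y i)" for i
  have w: "w \<in> cfgs n dims" and w': "w' \<in> cfgs n dims"
    using x y R by (auto simp: cfgs_def w_def w'_def)
  have RR: "{..<n} - ({..<n} - R) = R"
    using R by auto
  have "pmult n dims A B x y = A x w * B w y"
    using R A B x y w by (rule pmult_supported_complement) (simp_all add: w_def)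
  moreover have "A x w = A w' y"
    using A x w w' y by (rule supported_on_eq) (auto simp: w_def w'_def)
  moreover have "B w y = B x w'"
    using B w y x w' by (rule supported_on_eq) (auto simp: w_def w'_def)
  moreover have "pmult n dims B A x y = B x w' * A w' y"
    by (rule pmult_supported_complement[where R = "{..<n} - R"]) (use A B x y w' in \<open>auto simp: RR w'_def\<close>)
  ultimately show ?thesis
    by simp
qed

lemma supported_on_all: "supported_on n dims {..<n} A"
proof -
  have "(\<lambda>i. if i \<in> {..<n} then x i else 0) = x" if "x \<in> cfgs n dims" for x
    using that by (auto simp: cfgs_def)
  then show ?thesis
    unfolding supported_on_def by (intro exI[of _ A]) auto
qed

locale isometric_code =
  fixes n :: nat and dims :: "nat \<Rightarrow> nat" and dL dJ :: nat and V :: enc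
  assumes isometry: "is_isometry n dims dL dJ V"
begin

abbreviation "Cfgs \<equiv> cfgs n dims"
abbreviation "Lbls \<equiv> lidx dL dJ"

lemma adjoint_mmult_self: "k \<in> Lbls \<Longrightarrow> k' \<in> Lbls \<Longrightarrow> mmult Cfgs (adjoint V) V k k' = idm k k'"
  using isometry by (simp add: is_isometry_iff)

lemma adjoint_mmult_cancel: "k \<in> Lbls \<Longrightarrow> mmult Cfgs (adjoint V) (mmult Lbls V W) k y = W k y"
proof -
  assume k: "k \<in> Lbls"
  have "mmult Cfgs (adjoint V) (mmult Lbls V W) k y = mmult Lbls (mmult Cfgs (adjoint V) V) W k y"
    by (simp add: mmult_assoc)
  also have "\<dots> = mmult Lbls idm W k y"
    by (rule mmult_cong_left) (use k in \<open>simp add: adjoint_mmult_self\<close>)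
  also have "\<dots> = W k y"
    using k by (simp add: mmult_idm_left finite_lidx)
  finally show ?thesis .
qed

lemma code_proj_mmult_self: "k \<in> Lbls \<Longrightarrow> mmult Cfgs (code_proj dL dJ V) V x k = V x k"
proof -
  assume k: "k \<in> Lbls"
  have "mmult Cfgs (code_proj dL dJ V) V x k = mmult Lbls V (mmult Cfgs (adjoint V) V) x k"
    by (simp add: code_proj_eq_mmult mmult_assoc)
  also have "\<dots> = mmult Lbls V idm x k"
    by (rule mmult_cong_right) (use k in \<open>simp add: adjoint_mmult_self\<close>)
  also have "\<dots> = V x k"
    using k by (simp add: mmult_idm_right finite_lidx)
  finally show ?thesis .
qed

lemma pullback_pmult:
  assumes B: "CSP n dims dL dJ V B" and k': "k' \<in> Lbls"
  shows "pullback n dims V (pmult n dims A B) k k'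
       = mmult Lbls (pullback n dims V A) (pullback n dims V B) k k'"
proof -
  let ?P = "code_proj dL dJ V"
  \<comment> \<open>\<Pi> V = V and B commutes with \<Pi>, so B V = \<Pi> B V = V (V\<dagger> B V).\<close>
  have BV: "mmult Cfgs B V z k' = mmult Cfgs (mmult Cfgs ?P B) V z k'" if z: "z \<in> Cfgs" for z
  proof -
    have "mmult Cfgs B V z k' = mmult Cfgs B (mmult Cfgs ?P V) z k'"
      by (rule mmult_cong_right) (use k' in \<open>simp add: code_proj_mmult_self\<close>)
    also have "\<dots> = mmult Cfgs (mmult Cfgs B ?P) V z k'"
      by (simp add: mmult_assoc)
    also have "\<dots> = mmult Cfgs (mmult Cfgs ?P B) V z k'"
      by (rule mmult_cong_left) (use B z in \<open>simp add: CSP_iff_mmult\<close>)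
    finally show ?thesis .
  qed
  have "pullback n dims V (pmult n dims A B) k k'
      = mmult Cfgs (mmult Cfgs (adjoint V) A) (mmult Cfgs B V) k k'"
    by (simp add: pullback_eq_mmult pmult_eq_mmult mmult_assoc)
  also have "\<dots> = mmult Cfgs (mmult Cfgs (adjoint V) A) (mmult Cfgs (mmult Cfgs ?P B) V) k k'"
    by (rule mmult_cong_right) (rule BV)
  also have "\<dots> = mmult Lbls (pullback n dims V A) (pullback n dims V B) k k'"
    by (simp add: pullback_eq_mmult code_proj_eq_mmult mmult_assoc)
  finally show ?thesis .
qed

definition encode :: "((nat \<times> nat) \<Rightarrow> (nat \<times> nat) \<Rightarrow> complex) \<Rightarrow> pop"
  where "encode M = mmult Lbls (mmult Lbls V M) (adjoint V)"

lemma encode_cong: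
  "(\<And>a b. a \<in> Lbls \<Longrightarrow> b \<in> Lbls \<Longrightarrow> M a b = M' a b) \<Longrightarrow> encode M = encode M'"
  unfolding encode_def mmult_def by (intro ext sum.cong refl arg_cong2[where f = "(*)"]) auto

lemma code_proj_eq_encode: "code_proj dL dJ V = encode idm"
proof (intro ext)
  fix x y
  show "code_proj dL dJ V x y = encode idm x y"
    unfolding code_proj_eq_mmult encode_def
    by (rule mmult_cong_left) (simp add: mmult_idm_right finite_lidx)
qed

lemma pmult_encode: "pmult n dims (encode M) (encode N) = encode (mmult Lbls M N)"
proof (intro ext)
  fix x y
  have "pmult n dims (encode M) (encode N) x y
      = mmult Lbls V (mmult Lbls M (mmult Cfgs (adjoint V) (mmult Lbls V (mmult Lbls N (adjoint V))))) x y"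
    by (simp add: pmult_eq_mmult encode_def mmult_assoc)
  also have "\<dots> = mmult Lbls V (mmult Lbls M (mmult Lbls N (adjoint V))) x y"
    by (intro mmult_cong_right) (simp add: adjoint_mmult_cancel)
  also have "\<dots> = encode (mmult Lbls M N) x y"
    by (simp add: encode_def mmult_assoc)
  finally show "pmult n dims (encode M) (encode N) x y = encode (mmult Lbls M N) x y" .
qed

lemma pullback_encode:
  assumes k: "k \<in> Lbls" and k': "k' \<in> Lbls"
  shows "pullback n dims V (encode M) k k' = M k k'"
proof -
  have "pullback n dims V (encode M) k k'
      = mmult Cfgs (adjoint V) (mmult Lbls V (mmult Lbls M (mmult Cfgs (adjoint V) V))) k k'"
    by (simp add: pullback_eq_mmult encode_def mmult_assoc)
  also have "\<dots> = mmult Lbls M (mmult Cfgs (adjoint V) V) k k'"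
    using k by (rule adjoint_mmult_cancel)
  also have "\<dots> = mmult Lbls M idm k k'"
    by (rule mmult_cong_right) (use k' in \<open>simp add: adjoint_mmult_self\<close>)
  also have "\<dots> = M k k'"
    using k' by (simp add: mmult_idm_right finite_lidx)
  finally show ?thesis .
qed

lemma CSP_encode: "CSP n dims dL dJ V (encode M)"
proof -
  have "encode (mmult Lbls M idm) = encode (mmult Lbls idm M)"
    by (rule encode_cong) (simp add: mmult_idm_left mmult_idm_right finite_lidx)
  then show ?thesis
    by (simp add: CSP_def code_proj_eq_encode pmult_encode)
qed

lemma bare_CSP_impl_encode: "bare_CSP_impl n dims dL dJ V (encode (tensor_id AL)) AL"
  by (simp add: bare_CSP_impl_iff CSP_encode pullback_encode)

lemma bare_CSP_impl_pmult:
  assumes A: "bare_CSP_impl n dims dL dJ V A AL" and B: "bare_CSP_impl n dims dL dJ V B BL"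
  shows "bare_CSP_impl n dims dL dJ V (pmult n dims A B) (\<lambda>l l'. \<Sum>m<dL. AL l m * BL m l')"
proof -
  have B_CSP: "CSP n dims dL dJ V B"
    using B by (simp add: bare_CSP_impl_iff)
  have "CSP n dims dL dJ V (pmult n dims A B)"
    using A B by (intro CSP_pmult) (simp_all add: bare_CSP_impl_iff)
  moreover have "pullback n dims V (pmult n dims A B) k k' = tensor_id (\<lambda>l l'. \<Sum>m<dL. AL l m * BL m l') k k'"
    if k: "k \<in> Lbls" and k': "k' \<in> Lbls" for k k'
  proof -
    have "pullback n dims V (pmult n dims A B) k k'
        = mmult Lbls (pullback n dims V A) (pullback n dims V B) k k'"
      using B_CSP k' by (rule pullback_pmult)
    also have "\<dots> = mmult Lbls (tensor_id AL) (tensor_id BL) k k'"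
      unfolding mmult_def using A B k k' by (intro sum.cong) (simp_all add: bare_CSP_impl_iff)
    also have "\<dots> = tensor_id (\<lambda>l l'. \<Sum>m<dL. AL l m * BL m l') k k'"
      using k by (rule mmult_tensor_id)
    finally show ?thesis .
  qed
  ultimately show ?thesis
    by (simp add: bare_CSP_impl_iff)
qed

lemma correctable_empty: "correctable n dims dL dJ V {}"
  unfolding correctable_def Diff_empty using supported_on_all bare_CSP_impl_encode by blast

lemma bare_CSP_impl_logical_eq:
  assumes A: "bare_CSP_impl n dims dL dJ V A AL" and B: "bare_CSP_impl n dims dL dJ V B BL"
    and AB: "\<And>x y. x \<in> Cfgs \<Longrightarrow> y \<in> Cfgs \<Longrightarrow> A x y = B x y"
    and dJ: "1 \<le> dJ" and l: "l < dL" "l' < dL"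
  shows "AL l l' = BL l l'"
proof -
  have k: "(l, 0) \<in> Lbls" and k': "(l', 0) \<in> Lbls"
    using dJ l by (auto simp: lidx_def)
  have "pullback n dims V A (l, 0) (l', 0) = pullback n dims V B (l, 0) (l', 0)"
    unfolding pullback_def using AB by (intro sum.cong refl) auto
  with A B k k' show ?thesis
    by (simp add: bare_CSP_impl_iff tensor_id_def)
qed

lemma not_correctable_if_complement_correctable:
  assumes dJ: "1 \<le> dJ" and dL: "2 \<le> dL" and R: "R \<subseteq> {..<n}"
    and compl: "correctable n dims dL dJ V ({..<n} - R)"
  shows "\<not> correctable n dims dL dJ V R"
proof
  define E01 :: "nat \<Rightarrow> nat \<Rightarrow> complex" where "E01 l l' = (if l = 0 \<and> l' = 1 then 1 else 0)" for l l'
  define E10 :: "nat \<Rightarrow> nat \<Rightarrow> complex" where "E10 l l' = (if l = 1 \<and> l' = 0 then 1 else 0)" for l l'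
  assume "correctable n dims dL dJ V R"
  then obtain B where B_supp: "supported_on n dims ({..<n} - R) B"
    and B: "bare_CSP_impl n dims dL dJ V B E10"
    unfolding correctable_def by blast
  have "{..<n} - ({..<n} - R) = R"
    using R by auto
  with compl obtain A where A_supp: "supported_on n dims R A"
    and A: "bare_CSP_impl n dims dL dJ V A E01"
    unfolding correctable_def by metis
  have "(\<Sum>m<dL. E01 0 m * E10 m 0) = (\<Sum>m<dL. E10 0 m * E01 m 0)"
    using bare_CSP_impl_pmult[OF A B] bare_CSP_impl_pmult[OF B A]
      supported_on_complement_commute[OF R A_supp B_supp] dJ
    by (rule bare_CSP_impl_logical_eq) (use dL in auto)
  moreover have "(\<Sum>m<dL. E01 0 m * E10 m 0) = 1"
    using dL by (simp add: E01_def E10_def if_distrib cong: if_cong)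
  moreover have "(\<Sum>m<dL. E10 0 m * E01 m 0) = 0"
    by (simp add: E01_def E10_def)
  ultimately show False
    by simp
qed

end

lemma finite_cards_of_subsets: "finite {card R | R. R \<subseteq> {..<n::nat} \<and> P R}"
  by (rule finite_subset[of _ "{..n}"]) (auto dest: card_mono[rotated, OF _ finite_lessThan])

lemma code_distance_le:
  assumes "R \<subseteq> {..<n}" and "\<not> correctable n dims dL dJ V R"
  shows "code_distance n dims dL dJ V \<le> card R"
  unfolding code_distance_def using assms by (intro Min_le finite_cards_of_subsets) auto

lemma code_price_attained:
  assumes "correctable n dims dL dJ V {}"
  obtains R where "R \<subseteq> {..<n}" and "correctable n dims dL dJ V ({..<n} - R)"
    and "card R = code_price n dims dL dJ V"
proof -
  let ?P = "{card R | R. R \<subseteq> {..<n} \<and> correctable n dims dL dJ V ({..<n} - R)}"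
  have "correctable n dims dL dJ V ({..<n} - {..<n})"
    using assms by simp
  then have "card {..<n} \<in> ?P"
    by blast
  then have "Min ?P \<in> ?P"
    by (intro Min_in finite_cards_of_subsets) auto
  then show ?thesis
    using that unfolding code_price_def by auto
qed

theorem lemma3:
  fixes n :: nat and dims :: "nat \<Rightarrow> nat" and dL dJ :: nat and V :: enc
  assumes "\<forall>i<n. 2 \<le> dims i"
    and "1 \<le> dJ"
    and "2 \<le> dL"
    and "is_isometry n dims dL dJ V"
  shows "code_distance n dims dL dJ V \<le> code_price n dims dL dJ V"
proof -
  interpret isometric_code n dims dL dJ V
    using assms(4) by unfold_locales
  obtain R where R: "R \<subseteq> {..<n}" "correctable n dims dL dJ V ({..<n} - R)"
    and price: "card R = code_price n dims dL dJ V"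
    using correctable_empty by (rule code_price_attained)
  have "\<not> correctable n dims dL dJ V R"
    using assms(2,3) R by (rule not_correctable_if_complement_correctable)
  with R(1) price show ?thesis
    by (metis code_distance_le)
qed

end
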